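(* Let $\Sigma$ be a finite alphabet, $\lambda\in[0,1)$, and let $L=\mathcal{L}^{>\lambda}(\mathcal{A}|\mathrm{ND})$ for some quantum automaton $\mathcal{A}$ over $\Sigma$. Then: (1) For any $w\in\Sigma^+$, $u\in\Sigma^*$ and $v\in\Sigma^\omega$, if $uv\in L$ then there are infinitely many positive integers $k$ such that $uw^kv\in L$. (2) For any $v\in L$, there are infinitely many finite prefixes $v_n$ of $v$ such that $v_nw^\omega\in L$ for all $w\in\Sigma^+$.
   Context: A quantum automaton is a tuple $\mathcal{A}=(\mathcal{H},|s_0\rangle,\Sigma,\{U_\sigma:\sigma\in\Sigma\},F)$ where $\mathcal{H}$ is a finite-dimensional complex Hilbert space, $|s_0\rangle$ a unit vector, $\Sigma$ a finite alphabet, each $U_\sigma$ unitary on $\mathcal{H}$, and $F$ a subspace of $\mathcal{H}$. For a finite word $x=\sigma_1\cdots\sigma_m$, $U_x=U_{\sigma_m}\cdots U_{\sigma_1}$. For $w\in\Sigma^\omega$ with prefixes $w_n$ of length $n$, the non-disturbing run is $|s_n\rangle=U_{w_n}|s_0\rangle$ and $$f^{\mathrm{ND}}_{\mathcal{A}}(w)=\sup_{|\psi\rangle\in F,\ \||\psi\rangle\|=1}\sup_{\{n_i\}}\inf_{i\ge1}|\langle\psi|s_{n_i}\rangle|^2,$$ over strictly increasing sequences $0\le n_1<n_2<\cdots$. $\mathcal{L}^{>\lambda}(\mathcal{A}|\mathrm{ND})=\{w\in\Sigma^\omega: f^{\mathrm{ND}}_{\mathcal{A}}(w)>\lambda\}$.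 $w^\omega$ denotes the infinite repetition of $w$. *)

theory Defs
  imports "HOL-Analysis.Analysis" "HOL-Library.Omega_Words_Fun"
begin

definition cinner :: "complex ^ 'n \<Rightarrow> complex ^ 'n \<Rightarrow> complex" where
  "cinner x y = (\<Sum>i\<in>UNIV. cnj (x $ i) * y $ i)"

definition cadjoint :: "complex ^ 'n ^ 'n \<Rightarrow> complex ^ 'n ^ 'n" where
  "cadjoint A = (\<chi> i j. cnj (A $ j $ i))"

definition unitary :: "complex ^ 'n ^ 'n \<Rightarrow> bool" where
  "unitary A \<longleftrightarrow> cadjoint A ** A = mat 1 \<and> A ** cadjoint A = mat 1"

definition csubspace :: "(complex ^ 'n) set \<Rightarrow> bool" where
  "csubspace F \<longleftrightarrow> 0 \<in> F \<and> (\<forall>x\<in>F. \<forall>y\<in>F. x + y \<in> F)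
     \<and> (\<forall>c::complex. \<forall>x\<in>F. (\<chi> i. c * x $ i) \<in> F)"

text \<open>Quantum automaton (H = complex^'n, s0, Sigma = UNIV :: 'a set, U, F).\<close>
definition quantum_automaton ::
  "complex ^ 'n \<Rightarrow> ('a \<Rightarrow> complex ^ 'n ^ 'n) \<Rightarrow> (complex ^ 'n) set \<Rightarrow> bool" where
  "quantum_automaton s0 U F \<longleftrightarrow> norm s0 = 1 \<and> (\<forall>\<sigma>. unitary (U \<sigma>)) \<and> csubspace F"

primrec run :: "complex ^ 'n \<Rightarrow> ('a \<Rightarrow> complex ^ 'n ^ 'n) \<Rightarrow> 'a word \<Rightarrow> nat \<Rightarrow> complex ^ 'n" where
  "run s0 U w 0 = s0"
| "run s0 U w (Suc n) = U (w n) *v run s0 U w n"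

text \<open>f^ND; the supremum of the empty set is taken to be 0 (all values are \<ge> 0).\<close>
definition fND :: "complex ^ 'n \<Rightarrow> ('a \<Rightarrow> complex ^ 'n ^ 'n) \<Rightarrow> (complex ^ 'n) set \<Rightarrow> 'a word \<Rightarrow> real" where
  "fND s0 U F w = Sup ({(INF i. (cmod (cinner \<psi> (run s0 U w (ns i))))\<^sup>2) | \<psi> ns.
        \<psi> \<in> F \<and> norm \<psi> = 1 \<and> strict_mono (ns :: nat \<Rightarrow> nat)} \<union> {0})"

definition lang_ND :: "complex ^ 'n \<Rightarrow> ('a \<Rightarrow> complex ^ 'n ^ 'n) \<Rightarrow> (complex ^ 'n) set \<Rightarrow> real \<Rightarrow> 'a word set" where
  "lang_ND s0 U F lam = {w. fND s0 U F w > lam}"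

end

theory Submission imports Defs begin

text \<open>
  Reading a finite word x maps the current state s to U_x s, a unitary and hence isometric
  map of the finite-dimensional state space. Its orbit lies in a compact sphere, so some
  subsequence converges, and comparing two far-apart terms shows that U_x^k s returns within
  any distance e of s for infinitely many k.
  Moreover f^ND(w) > lam means that some unit vector psi in F has overlap
  |<psi|s_n>|^2 >= c > lam with infinitely many states s_n of the run on w, and the
  overlap is 2-Lipschitz in the state. For (1), after u insert w^k with U_w^k s close to the
  state s reached after u: every later state moves by the same small distance, so infinitely
  many overlaps stay above lam. For (2), take a prefix v_n whose final state s has overlap
  at least c; the states of v_n w^omega at the ends of the blocks w are U_w^k s, infinitely many of
  which are close to s.
\<close>

lemma INFM_nat_shift: "(\<exists>\<^sub>\<infinity>n. P (n + k)) \<longleftrightarrow> (\<exists>\<^sub>\<infinity>n::nat. P n)"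
  using eventually_sequentially_seg[where P = "\<lambda>n. \<not> P n"]
  by (simp add: frequently_def cofinite_eq_sequentially)

lemma isometry_recurrent:
  fixes T :: "'b::heine_borel \<Rightarrow> 'b"
  assumes iso: "\<And>s t. dist (T s) (T t) = dist s t"
    and bounded: "bounded (range (\<lambda>k. (T ^^ k) x))" and "0 < e"
  shows "\<exists>\<^sub>\<infinity>k. dist ((T ^^ k) x) x < e"
proof -
  have iso_pow: "dist ((T ^^ j) s) ((T ^^ j) t) = dist s t" for j s t
    by (induction j) (simp_all add: iso)
  obtain l r where "strict_mono r" and "((\<lambda>k. (T ^^ k) x) \<circ> r) \<longlonglongrightarrow> l"
    using bounded bounded_imp_convergent_subsequence by blast
  then have "Cauchy ((\<lambda>k. (T ^^ k) x) \<circ> r)"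
    by (intro LIMSEQ_imp_Cauchy)
  then obtain M where M: "\<And>m n. M \<le> m \<Longrightarrow> M \<le> n \<Longrightarrow> dist ((T ^^ r m) x) ((T ^^ r n) x) < e"
    using \<open>0 < e\<close> unfolding Cauchy_def comp_def by blast
  show ?thesis
    unfolding INFM_nat
  proof
    fix N
    define n where "n = r M + Suc N"
    define k where "k = r n - r M"
    have "M \<le> r M" "n \<le> r n"
      using seq_suble[OF \<open>strict_mono r\<close>] by auto
    then have "r n = r M + k" and "N < k"
      unfolding n_def k_def by auto
    then have "(T ^^ r n) x = (T ^^ r M) ((T ^^ k) x)"
      by (simp add: funpow_add)
    then have "dist ((T ^^ k) x) x = dist ((T ^^ r n) x) ((T ^^ r M) x)"
      by (simp add: iso_pow)
    also have "\<dots> < e"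
      using M \<open>M \<le> r M\<close> \<open>n \<le> r n\<close> unfolding n_def by simp
    finally show "\<exists>k>N. dist ((T ^^ k) x) x < e"
      using \<open>N < k\<close> by blast
  qed
qed

lemma cinner_self: "cinner x x = complex_of_real ((norm x)\<^sup>2)"
proof -
  have "(norm x)\<^sup>2 = (\<Sum>i\<in>UNIV. (cmod (x $ i))\<^sup>2)"
    by (simp add: norm_vec_def L2_set_def sum_nonneg)
  moreover have "cinner x x = (\<Sum>i\<in>UNIV. complex_of_real ((cmod (x $ i))\<^sup>2))"
    unfolding cinner_def
    by (rule sum.cong) (simp_all add: complex_mult_cnj cmod_power2 mult.commute)
  ultimately show ?thesis by simp
qed

lemma cinner_matrix_vector_mult: "cinner (A *v x) y = cinner x (cadjoint A *v y)"
proof -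
  have "cinner (A *v x) y = (\<Sum>i\<in>UNIV. \<Sum>j\<in>UNIV. cnj (A$i$j) * cnj (x$j) * y$i)"
    unfolding cinner_def matrix_vector_mult_def
    by (simp add: cnj_sum sum_distrib_right)
  also have "\<dots> = (\<Sum>j\<in>UNIV. \<Sum>i\<in>UNIV. cnj (A$i$j) * cnj (x$j) * y$i)"
    by (rule sum.swap)
  also have "\<dots> = cinner x (cadjoint A *v y)"
    unfolding cinner_def matrix_vector_mult_def cadjoint_def
    by (simp add: sum_distrib_left mult_ac)
  finally show ?thesis .
qed

lemma cinner_diff_right: "cinner x (y - z) = cinner x y - cinner x z"
  by (simp add: cinner_def sum_subtractf right_diff_distrib)

lemma norm_cinner_le: "cmod (cinner x y) \<le> norm x * norm y"
proof -
  have "cmod (cinner x y) \<le> (\<Sum>i\<in>UNIV. cmod (cnj (x $ i) * y $ i))"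
    unfolding cinner_def by (rule norm_sum)
  also have "\<dots> = (\<Sum>i\<in>UNIV. \<bar>cmod (x $ i)\<bar> * \<bar>cmod (y $ i)\<bar>)"
    by (simp add: norm_mult)
  also have "\<dots> \<le> norm x * norm y"
    unfolding norm_vec_def by (rule L2_set_mult_ineq)
  finally show ?thesis .
qed

lemma unitary_norm_mult: "unitary A \<Longrightarrow> norm (A *v x) = norm x"
proof -
  assume "unitary A"
  then have "cinner (A *v x) (A *v x) = cinner x x"
    by (simp add: cinner_matrix_vector_mult matrix_vector_mul_assoc unitary_def)
  then have "(norm (A *v x))\<^sup>2 = (norm x)\<^sup>2"
    by (metis cinner_self of_real_eq_iff)
  then show ?thesis by (simp add: power2_eq_iff_nonneg)
qed

definition overlap :: "complex ^ 'n \<Rightarrow> complex ^ 'n \<Rightarrow> real" where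
  "overlap \<psi> s = (cmod (cinner \<psi> s))\<^sup>2"

lemma overlap_le_one: "norm \<psi> \<le> 1 \<Longrightarrow> norm s \<le> 1 \<Longrightarrow> overlap \<psi> s \<le> 1"
  using norm_cinner_le[of \<psi> s] mult_mono[of "norm \<psi>" 1 "norm s" 1]
  by (simp add: overlap_def power_le_one)

lemma overlap_lipschitz:
  assumes "norm \<psi> \<le> 1" "norm s \<le> 1" "norm t \<le> 1"
  shows "overlap \<psi> s - overlap \<psi> t \<le> 2 * dist s t"
proof -
  let ?x = "cmod (cinner \<psi> s)" and ?y = "cmod (cinner \<psi> t)"
  have "?x \<le> 1" "?y \<le> 1"
    using norm_cinner_le[of \<psi> s] norm_cinner_le[of \<psi> t]
      mult_le_one[OF assms(1) norm_ge_zero assms(2)] mult_le_one[OF assms(1) norm_ge_zero assms(3)]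
    by linarith+
  have "\<bar>?x - ?y\<bar> \<le> cmod (cinner \<psi> s - cinner \<psi> t)"
    by (rule norm_triangle_ineq3)
  also have "\<dots> \<le> norm \<psi> * dist s t"
    using norm_cinner_le[of \<psi> "s - t"] by (simp add: cinner_diff_right dist_norm)
  also have "\<dots> \<le> dist s t"
    using assms(1) by (simp add: mult_left_le_one_le)
  finally have "\<bar>?x - ?y\<bar> \<le> dist s t" .
  have "?x\<^sup>2 - ?y\<^sup>2 = (?x + ?y) * (?x - ?y)"
    by (simp add: power2_eq_square algebra_simps)
  also have "\<dots> \<le> (?x + ?y) * \<bar>?x - ?y\<bar>"
    by (intro mult_left_mono) auto
  also have "\<dots> \<le> 2 * dist s t"
    using \<open>\<bar>?x - ?y\<bar> \<le> dist s t\<close> \<open>?x \<le> 1\<close> \<open>?y \<le> 1\<close> by (intro mult_mono) auto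
  finally show ?thesis by (simp add: overlap_def)
qed

definition final_state :: "complex ^ 'n \<Rightarrow> ('a \<Rightarrow> complex ^ 'n ^ 'n) \<Rightarrow> 'a list \<Rightarrow> complex ^ 'n" where
  "final_state s U x = foldl (\<lambda>s a. U a *v s) s x"

lemma final_state_append: "final_state s U (x @ y) = final_state (final_state s U x) U y"
  by (simp add: final_state_def)

lemma final_state_replicate:
  "final_state s U (concat (replicate k w)) = ((\<lambda>t. final_state t U w) ^^ k) s"
  by (induction k arbitrary: s)
    (simp_all add: final_state_def funpow_Suc_right del: funpow.simps)

lemma final_state_diff: "final_state (s - t) U x = final_state s U x - final_state t U x"
  by (induction x arbitrary: s t) (simp_all add: final_state_def matrix_vector_mult_diff_distrib)

lemma norm_final_state: "\<forall>a. unitary (U a) \<Longrightarrow> norm (final_state s U x) = norm s"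
  by (induction x arbitrary: s) (simp_all add: final_state_def unitary_norm_mult)

lemma dist_final_state:
  "\<forall>a. unitary (U a) \<Longrightarrow> dist (final_state s U x) (final_state t U x) = dist s t"
  by (simp add: dist_norm norm_final_state flip: final_state_diff)

lemma run_eq_final_state_prefix: "run s U v n = final_state s U (prefix n v)"
  by (induction n) (simp_all add: final_state_def subsequence_def)

lemma run_conc: "run s U (x \<frown> v) (n + length x) = run (final_state s U x) U v n"
  by (simp add: run_eq_final_state_prefix final_state_append)

lemma iter_eq_conc_replicate:
  assumes "w \<noteq> []"
  shows "w\<^sup>\<omega> = concat (replicate k w) \<frown> w\<^sup>\<omega>"
proof (induction k)
  case (Suc k)
  have "w\<^sup>\<omega> = w \<frown> w\<^sup>\<omega>"
    using assms by (intro iter_unroll) simp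
  also have "\<dots> = w \<frown> (concat (replicate k w) \<frown> w\<^sup>\<omega>)"
    by (simp only: Suc.IH[symmetric])
  finally show ?case by simp
qed simp

lemma run_conc_iter:
  assumes "w \<noteq> []"
  shows "run s U (p \<frown> w\<^sup>\<omega>) (length p + k * length w) = final_state s U (p @ concat (replicate k w))"
proof -
  have "p \<frown> w\<^sup>\<omega> = (p @ concat (replicate k w)) \<frown> w\<^sup>\<omega>"
    using conc_conc[of p "concat (replicate k w)" "w\<^sup>\<omega>"]
    by (simp only: iter_eq_conc_replicate[OF assms, symmetric])
  moreover have "length (p @ concat (replicate k w)) = length p + k * length w"
    by (simp add: length_concat sum_list_replicate)
  ultimately show ?thesis
    using run_conc[of s U "p @ concat (replicate k w)" "w\<^sup>\<omega>" 0] by simp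
qed

lemma dist_run: "\<forall>a. unitary (U a) \<Longrightarrow> dist (run s U v n) (run t U v n) = dist s t"
  by (simp add: run_eq_final_state_prefix dist_final_state)

lemma norm_run: "\<forall>a. unitary (U a) \<Longrightarrow> norm (run s U v n) = norm s"
  by (simp add: run_eq_final_state_prefix norm_final_state)

lemma INFM_run_conc:
  "(\<exists>\<^sub>\<infinity>n. P (run s U (x \<frown> v) n)) \<longleftrightarrow> (\<exists>\<^sub>\<infinity>n. P (run (final_state s U x) U v n))"
  using INFM_nat_shift[of "\<lambda>n. P (run s U (x \<frown> v) n)" "length x"] by (simp add: run_conc)

text \<open>The element 0 that fND adds to its supremum is irrelevant because lam is nonnegative.\<close>

lemma mem_lang_ND_iff:
  assumes "quantum_automaton s0 U F" and "0 \<le> lam"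
  shows "w \<in> lang_ND s0 U F lam \<longleftrightarrow>
    (\<exists>\<psi>\<in>F. norm \<psi> = 1 \<and> (\<exists>c>lam. \<exists>\<^sub>\<infinity>n. c \<le> overlap \<psi> (run s0 U w n)))"
proof -
  define S where "S = {(INF i. overlap \<psi> (run s0 U w (ns i))) | \<psi> ns.
    \<psi> \<in> F \<and> norm \<psi> = 1 \<and> strict_mono (ns :: nat \<Rightarrow> nat)}"
  have fND_eq: "fND s0 U F w = Sup (S \<union> {0})"
    by (simp add: fND_def S_def overlap_def)
  have bdd_below: "bdd_below (range (\<lambda>i. overlap \<psi> (run s0 U w (ns i))))"
    for \<psi> and ns :: "nat \<Rightarrow> nat"
    by (rule bdd_belowI[of _ 0]) (auto simp: overlap_def)
  have unit_run: "norm (run s0 U w n) = 1" for n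
    using assms(1) norm_run unfolding quantum_automaton_def by metis
  have "bdd_above (S \<union> {0})"
  proof (rule bdd_aboveI[of _ 1])
    fix x assume "x \<in> S \<union> {0}"
    then consider "x = 0" | \<psi> and ns :: "nat \<Rightarrow> nat" where "norm \<psi> = 1"
      "x = (INF i. overlap \<psi> (run s0 U w (ns i)))"
      unfolding S_def by blast
    then show "x \<le> 1"
    proof cases
      case 2
      then have "x \<le> overlap \<psi> (run s0 U w (ns 0))"
        using cINF_lower[OF bdd_below] by simp
      also have "\<dots> \<le> 1"
        using \<open>norm \<psi> = 1\<close> unit_run by (simp add: overlap_le_one)
      finally show ?thesis .
    qed simp
  qed
  then have "w \<in> lang_ND s0 U F lam \<longleftrightarrow> (\<exists>x\<in>S. lam < x)"
    using assms(2) by (auto simp: lang_ND_def fND_eq less_cSup_iff)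
  also have "\<dots> \<longleftrightarrow> (\<exists>\<psi>\<in>F. norm \<psi> = 1 \<and> (\<exists>c>lam. \<exists>\<^sub>\<infinity>n. c \<le> overlap \<psi> (run s0 U w n)))"
  proof
    assume "\<exists>x\<in>S. lam < x"
    then obtain \<psi> and ns :: "nat \<Rightarrow> nat" where "\<psi> \<in> F" "norm \<psi> = 1" "strict_mono ns"
      and lam: "lam < (INF i. overlap \<psi> (run s0 U w (ns i)))" (is "lam < ?c")
      unfolding S_def by blast
    have "range ns \<subseteq> {n. ?c \<le> overlap \<psi> (run s0 U w n)}"
      using cINF_lower[OF bdd_below[of \<psi> ns]] by auto
    moreover have "infinite (range ns)"
      using \<open>strict_mono ns\<close> by (simp add: range_inj_infinite strict_mono_imp_inj_on)
    ultimately have "\<exists>\<^sub>\<infinity>n. ?c \<le> overlap \<psi> (run s0 U w n)"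
      unfolding INFM_iff_infinite by (rule infinite_super)
    then show "\<exists>\<psi>\<in>F. norm \<psi> = 1 \<and> (\<exists>c>lam. \<exists>\<^sub>\<infinity>n. c \<le> overlap \<psi> (run s0 U w n))"
      using \<open>\<psi> \<in> F\<close> \<open>norm \<psi> = 1\<close> lam by blast
  next
    assume "\<exists>\<psi>\<in>F. norm \<psi> = 1 \<and> (\<exists>c>lam. \<exists>\<^sub>\<infinity>n. c \<le> overlap \<psi> (run s0 U w n))"
    then obtain \<psi> c where "\<psi> \<in> F" "norm \<psi> = 1" "lam < c"
      and "infinite {n. c \<le> overlap \<psi> (run s0 U w n)}"
      unfolding INFM_iff_infinite by blast
    then obtain ns :: "nat \<Rightarrow> nat" where "strict_mono ns"
      and "\<And>i. c \<le> overlap \<psi> (run s0 U w (ns i))"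
      using infinite_enumerate by blast
    then have "c \<le> (INF i. overlap \<psi> (run s0 U w (ns i)))"
      by (simp add: cINF_greatest)
    moreover have "(INF i. overlap \<psi> (run s0 U w (ns i))) \<in> S"
      unfolding S_def using \<open>\<psi> \<in> F\<close> \<open>norm \<psi> = 1\<close> \<open>strict_mono ns\<close> by blast
    ultimately show "\<exists>x\<in>S. lam < x"
      using \<open>lam < c\<close> by (blast intro: less_le_trans)
  qed
  finally show ?thesis .
qed

lemma final_state_recurrent:
  assumes "\<forall>a. unitary (U a)" and "0 < e"
  shows "\<exists>\<^sub>\<infinity>k. dist (final_state s U (concat (replicate k w))) s < e"
proof -
  have "\<exists>\<^sub>\<infinity>k. dist (((\<lambda>t. final_state t U w) ^^ k) s) s < e"
  proof (rule isometry_recurrent)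
    show "dist (final_state t U w) (final_state t' U w) = dist t t'" for t t'
      using assms(1) by (rule dist_final_state)
    show "bounded (range (\<lambda>k. ((\<lambda>t. final_state t U w) ^^ k) s))"
      using assms(1) by (intro boundedI[of _ "norm s"])
        (auto simp: norm_final_state simp flip: final_state_replicate)
  qed fact
  then show ?thesis
    by (simp add: final_state_replicate)
qed

lemma frequently_overlap_run_near:
  assumes "\<forall>a. unitary (U a)" and "norm \<psi> = 1" "norm s = 1" "norm t = 1"
    and "\<exists>\<^sub>\<infinity>n. c \<le> overlap \<psi> (run s U v n)"
  shows "\<exists>\<^sub>\<infinity>n. c - 2 * dist s t \<le> overlap \<psi> (run t U v n)"
  using assms(5)
proof (rule INFM_mono)
  fix n
  assume "c \<le> overlap \<psi> (run s U v n)"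
  moreover have "overlap \<psi> (run s U v n) - overlap \<psi> (run t U v n) \<le> 2 * dist s t"
    using overlap_lipschitz[of \<psi> "run s U v n" "run t U v n"] assms(1-4)
    by (simp add: norm_run dist_run)
  ultimately show "c - 2 * dist s t \<le> overlap \<psi> (run t U v n)"
    by linarith
qed

lemma lang_ND_pumping:
  assumes qa: "quantum_automaton s0 U F" and "0 \<le> lam"
    and "u \<frown> v \<in> lang_ND s0 U F lam"
  shows "infinite {k. 0 < k \<and> (u @ concat (replicate k w)) \<frown> v \<in> lang_ND s0 U F lam}"
proof -
  have unitary: "\<forall>a. unitary (U a)" and "norm s0 = 1"
    using qa unfolding quantum_automaton_def by auto
  obtain \<psi> c where \<psi>: "\<psi> \<in> F" "norm \<psi> = 1" and "lam < c"
    and "\<exists>\<^sub>\<infinity>n. c \<le> overlap \<psi> (run s0 U (u \<frown> v) n)"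
    using assms mem_lang_ND_iff by blast
  then have freq: "\<exists>\<^sub>\<infinity>n. c \<le> overlap \<psi> (run (final_state s0 U u) U v n)"
    using INFM_run_conc[where P = "\<lambda>r. c \<le> overlap \<psi> r"] by blast
  define s where "s = final_state s0 U u"
  have "norm s = 1"
    using unitary \<open>norm s0 = 1\<close> by (simp add: s_def norm_final_state)
  have pumped: "(u @ concat (replicate k w)) \<frown> v \<in> lang_ND s0 U F lam"
    if close: "dist (final_state s U (concat (replicate k w))) s < (c - lam) / 2" for k
  proof -
    define y where "y = final_state s U (concat (replicate k w))"
    have "norm y = 1"
      using unitary \<open>norm s = 1\<close> by (simp add: y_def norm_final_state)
    have "\<exists>\<^sub>\<infinity>n. c - 2 * dist s y \<le> overlap \<psi> (run y U v n)"
      using frequently_overlap_run_near unitary \<psi>(2) \<open>norm s = 1\<close> \<open>norm y = 1\<close> freq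
      unfolding s_def by blast
    then have "\<exists>\<^sub>\<infinity>n. c - 2 * dist s y \<le> overlap \<psi> (run s0 U ((u @ concat (replicate k w)) \<frown> v) n)"
      using INFM_run_conc[where P = "\<lambda>r. c - 2 * dist s y \<le> overlap \<psi> r"
          and s = s0 and x = "u @ concat (replicate k w)"]
      by (simp add: final_state_append y_def s_def)
    moreover have "lam < c - 2 * dist s y"
      using close by (simp add: y_def dist_commute)
    ultimately show ?thesis
      using mem_lang_ND_iff[OF qa \<open>0 \<le> lam\<close>] \<psi> by blast
  qed
  have "\<exists>\<^sub>\<infinity>k. dist (final_state s U (concat (replicate k w))) s < (c - lam) / 2"
    using \<open>lam < c\<close> by (intro final_state_recurrent[OF unitary]) simp
  then have "\<exists>\<^sub>\<infinity>k. (u @ concat (replicate k w)) \<frown> v \<in> lang_ND s0 U F lam"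
    by (rule INFM_mono) (rule pumped)
  then have "\<exists>\<^sub>\<infinity>k. (u @ concat (replicate k w)) \<frown> v \<in> lang_ND s0 U F lam \<and> k \<noteq> 0"
    by (rule INFM_conjI) (rule MOST_neq(1))
  then show ?thesis
    unfolding INFM_iff_infinite by (simp add: conj_commute)
qed

lemma lang_ND_prefix_iter:
  assumes qa: "quantum_automaton s0 U F" and "0 \<le> lam"
    and "v \<in> lang_ND s0 U F lam"
  shows "infinite {n. \<forall>w. w \<noteq> [] \<longrightarrow> prefix n v \<frown> w\<^sup>\<omega> \<in> lang_ND s0 U F lam}"
proof -
  have unitary: "\<forall>a. unitary (U a)" and "norm s0 = 1"
    using qa unfolding quantum_automaton_def by auto
  obtain \<psi> c where \<psi>: "\<psi> \<in> F" "norm \<psi> = 1" and "lam < c"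
    and freq: "\<exists>\<^sub>\<infinity>n. c \<le> overlap \<psi> (run s0 U v n)"
    using assms mem_lang_ND_iff by blast
  define e where "e = (c - lam) / 4"
  have "0 < e"
    using \<open>lam < c\<close> by (simp add: e_def)
  have periodic_extension: "prefix n v \<frown> w\<^sup>\<omega> \<in> lang_ND s0 U F lam"
    if "c \<le> overlap \<psi> (run s0 U v n)" and "w \<noteq> []" for n w
  proof -
    define s where "s = final_state s0 U (prefix n v)"
    have "norm s = 1"
      using unitary \<open>norm s0 = 1\<close> by (simp add: s_def norm_final_state)
    have "c \<le> overlap \<psi> s"
      using that(1) by (simp add: s_def run_eq_final_state_prefix)
    have "\<exists>\<^sub>\<infinity>k. c - 2 * e \<le> overlap \<psi> (run s0 U (prefix n v \<frown> w\<^sup>\<omega>) (n + k * length w))"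
      using final_state_recurrent[OF unitary \<open>0 < e\<close>, of s w]
    proof (rule INFM_mono)
      fix k
      define y where "y = final_state s U (concat (replicate k w))"
      assume "dist y s < e"
      have "norm y = 1"
        using unitary \<open>norm s = 1\<close> by (simp add: y_def norm_final_state)
      then have "overlap \<psi> s - overlap \<psi> y \<le> 2 * dist y s"
        using overlap_lipschitz[of \<psi> s y] \<psi>(2) \<open>norm s = 1\<close> by (simp add: dist_commute)
      moreover have "run s0 U (prefix n v \<frown> w\<^sup>\<omega>) (n + k * length w) = y"
        using run_conc_iter[OF \<open>w \<noteq> []\<close>, of s0 U "prefix n v" k]
        by (simp add: y_def s_def final_state_append)
      ultimately show "c - 2 * e \<le> overlap \<psi> (run s0 U (prefix n v \<frown> w\<^sup>\<omega>) (n + k * length w))"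
        using \<open>c \<le> overlap \<psi> s\<close> \<open>dist y s < e\<close> by simp
    qed
    then have "\<exists>\<^sub>\<infinity>m. c - 2 * e \<le> overlap \<psi> (run s0 U (prefix n v \<frown> w\<^sup>\<omega>) m)"
      by (rule INFM_inj) (use \<open>w \<noteq> []\<close> in \<open>simp add: inj_on_def\<close>)
    moreover have "lam < c - 2 * e"
      using \<open>lam < c\<close> by (simp add: e_def field_simps)
    ultimately show ?thesis
      using mem_lang_ND_iff[OF qa \<open>0 \<le> lam\<close>] \<psi> by blast
  qed
  from freq have "\<exists>\<^sub>\<infinity>n. \<forall>w. w \<noteq> [] \<longrightarrow> prefix n v \<frown> w\<^sup>\<omega> \<in> lang_ND s0 U F lam"
    by (rule INFM_mono) (blast intro: periodic_extension)
  then show ?thesis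
    by (simp add: INFM_iff_infinite)
qed

theorem theorem2:
  fixes s0 :: "complex ^ 'n" and U :: "'a::finite \<Rightarrow> complex ^ 'n ^ 'n"
    and F :: "(complex ^ 'n) set" and lam :: real
  assumes "quantum_automaton s0 U F"
    and "0 \<le> lam" and "lam < 1"
  shows "(\<forall>(w::'a list) (u::'a list) (v::'a word). w \<noteq> [] \<longrightarrow> u \<frown> v \<in> lang_ND s0 U F lam \<longrightarrow>
            infinite {k::nat. 0 < k \<and> (u @ concat (replicate k w)) \<frown> v \<in> lang_ND s0 U F lam})
       \<and> (\<forall>v \<in> lang_ND s0 U F lam.
            infinite {n::nat. \<forall>w::'a list. w \<noteq> [] \<longrightarrow> prefix n v \<frown> w\<^sup>\<omega> \<in> lang_ND s0 U F lam})"
  using lang_ND_pumping[OF assms(1,2)] lang_ND_prefix_iter[OF assms(1,2)] by blast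

end
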